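(* Let $A=(a_{ij})$, $B=(b_{ij})$ be real $2\times2$ payoff tables and let $\mathcal C=\mathbb V(f)\subset\mathbb P^2_{\mathbb C}$ be the Spohn cubic. Then $\mathcal C$ is reducible (equivalently, $f$ is a nonzero polynomial that factors nontrivially over $\mathbb C$) if and only if $f\neq0$ and at least one of the following holds: (1) $a_{11}=a_{12}$; (2) $a_{11}=a_{21}$; (3) $a_{21}=a_{22}$; (4) $b_{11}=b_{12}$; (5) $b_{11}=b_{21}$; (6) $b_{12}=b_{22}$; (7) $a_{12}=a_{22}$ and $b_{21}=b_{22}$; (8) $a_{12}=a_{21}$ and $b_{12}=b_{21}$; (9) $0=a_{12}(b_{12}-b_{22})+a_{21}(b_{22}-b_{21})+a_{22}(b_{21}-b_{12})=a_{11}(b_{22}-b_{12})+a_{21}(b_{11}-b_{22})+a_{22}(b_{12}-b_{11})=a_{11}(b_{22}-b_{21})+a_{12}(b_{11}-b_{22})+a_{22}(b_{21}-b_{11})$; (10) $0=a_{11}(b_{12}-b_{21})+a_{12}(b_{21}-b_{22})+a_{21}(b_{22}-b_{12})=a_{12}(b_{11}-b_{21})+a_{21}(b_{12}-b_{11})+a_{22}(b_{21}-b_{12})=a_{11}(b_{11}-b_{21})+a_{21}(b_{22}-b_{11})+a_{22}(b_{21}-b_{22})$; (11) $0=a_{12}(b_{22}-b_{21})+a_{21}(b_{12}-b_{22})+a_{22}(b_{21}-b_{12})=a_{11}(b_{22}-b_{21})+a_{21}(b_{11}-b_{22})+a_{22}(b_{21}-b_{11})=a_{11}(b_{22}-b_{12})+a_{12}(b_{11}-b_{22})+a_{22}(b_{12}-b_{11})$;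 (12) $0=a_{11}(b_{12}-b_{21})+a_{12}(b_{22}-b_{12})+a_{21}(b_{21}-b_{22})=a_{12}(b_{11}-b_{12})+a_{21}(b_{21}-b_{11})+a_{22}(b_{12}-b_{21})=a_{11}(b_{11}-b_{21})+a_{12}(b_{22}-b_{12})+a_{21}(b_{21}-b_{11})+a_{22}(b_{12}-b_{22})$.
   Context: The Spohn cubic of the game is the plane curve $\mathcal C=\mathbb V(f)\subset\mathbb P^2_{\mathbb C}$ with coordinates $[x:y:z]$ (obtained from the Spohn variety by eliminating $p_{22}$ and renaming $x=p_{11},y=p_{12},z=p_{21}$), where $f=c_1x^2y+c_2x^2z+c_3xy^2+c_4xz^2+c_5y^2z+c_6yz^2+c_7xyz$ with $c_1=(a_{11}-a_{22})(b_{11}-b_{12})$, $c_2=(a_{11}-a_{21})(b_{22}-b_{11})$, $c_3=(a_{12}-a_{22})(b_{11}-b_{12})$, $c_4=(a_{11}-a_{21})(b_{22}-b_{21})$, $c_5=(a_{12}-a_{22})(b_{21}-b_{12})$, $c_6=(a_{12}-a_{21})(b_{22}-b_{21})$, $c_7=(a_{12}-a_{21})(b_{22}-b_{11})+(a_{11}-a_{22})(b_{21}-b_{12})$. *)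

theory Defs
  imports Complex_Main "HOL-Computational_Algebra.Computational_Algebra"
begin

text \<open>Polynomials in three variables x, y, z over the complex numbers are represented as
  iterated univariate polynomials: C[x][y][z] = complex poly poly poly.
  The outermost variable is z, the middle one y, the innermost one x.\<close>

definition pX :: "complex poly poly poly" where "pX = [:[:[:0, 1:]:]:]"
definition pY :: "complex poly poly poly" where "pY = [:[:0, 1:]:]"
definition pZ :: "complex poly poly poly" where "pZ = [:0, 1:]"

definition cst :: "real \<Rightarrow> complex poly poly poly" where
  "cst r = [:[:[:complex_of_real r:]:]:]"

definition spohn_cubic ::
  "real \<Rightarrow> real \<Rightarrow> real \<Rightarrow> real \<Rightarrow> real \<Rightarrow> real \<Rightarrow> real \<Rightarrow> real \<Rightarrow> complex poly poly poly" where
  "spohn_cubic a11 a12 a21 a22 b11 b12 b21 b22 =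
     (let c1 = (a11 - a22) * (b11 - b12);
          c2 = (a11 - a21) * (b22 - b11);
          c3 = (a12 - a22) * (b11 - b12);
          c4 = (a11 - a21) * (b22 - b21);
          c5 = (a12 - a22) * (b21 - b12);
          c6 = (a12 - a21) * (b22 - b21);
          c7 = (a12 - a21) * (b22 - b11) + (a11 - a22) * (b21 - b12)
      in cst c1 * pX^2 * pY + cst c2 * pX^2 * pZ + cst c3 * pX * pY^2 + cst c4 * pX * pZ^2
         + cst c5 * pY^2 * pZ + cst c6 * pY * pZ^2 + cst c7 * pX * pY * pZ)"

definition reducible :: "'a::comm_semiring_1 \<Rightarrow> bool" where
  "reducible p \<longleftrightarrow> p \<noteq> 0 \<and> \<not> p dvd 1 \<and> \<not> irreducible p"

end

theory Submission
  imports Defs "HOL-Computational_Algebra.Field_as_Ring"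
begin

(* Normalising a22 = b12 = 0, which changes none of the conditions since f only involves the
   differences a_ij - a22 and b_ij - b12, the cubic becomes, as a polynomial in z over C[x,y],
     f = y (b11 x + b21 z) T - z V ((b11 - b22) x + (b21 - b22) z)
   with the linear forms T = a11 x + a12 y and V = (a11 - a21) x + (a12 - a21) y.
   Each of the conditions (1)-(8) exhibits a linear factor of f, and each of (9)-(12) a root
   z = k y or z = k T; in all cases both factors vanish at the origin, so neither is a unit.
   Conversely, suppose (1)-(8) all fail. Then the z-coefficients of f have no common prime factor,
   and the leading one is a nonzero multiple of the irreducible form V. So a nontrivial
   factorisation has two factors linear in z, one of them with unit leading coefficient, and f has
   a root w in C[x,y]. This w divides the constant coefficient b11 x y T, hence is a scalar multiple
   of a product of some of x, y, T. Comparing values at a few points rules out all of these except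
   w = k y and w = k T, which force (9) or (10), respectively (11) or (12). *)

section \<open>Polynomials over a domain\<close>

lemma irreducible_linear_poly_unit:
  fixes a b :: "'a::idom"
  assumes "b dvd 1"
  shows "irreducible [:a, b:]"
proof (rule irreducibleI)
  have "b \<noteq> 0" using assms by auto
  then show "[:a, b:] \<noteq> 0" and "\<not> [:a, b:] dvd 1" by (simp_all add: is_unit_poly_iff)
  fix p q assume pq: "[:a, b:] = p * q"
  with \<open>b \<noteq> 0\<close> have "p \<noteq> 0" "q \<noteq> 0" by auto
  then have "degree p + degree q = degree [:a, b:]" by (simp add: pq degree_mult_eq)
  also have "\<dots> = 1" using \<open>b \<noteq> 0\<close> by simp
  finally have "degree p + degree q = 1" .
  then consider "degree p = 0" | "degree q = 0" by linarith
  then show "p dvd 1 \<or> q dvd 1"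
  proof cases
    case 1
    then obtain c where c: "p = [:c:]" by (rule degree_eq_zeroE)
    have "b = coeff (p * q) 1" by (simp flip: pq)
    then have "c dvd b" by (simp add: c)
    then show ?thesis using assms c by (metis is_unit_const_poly_iff dvd_trans)
  next
    case 2
    then obtain c where c: "q = [:c:]" by (rule degree_eq_zeroE)
    have "b = coeff (p * q) 1" by (simp flip: pq)
    then have "c dvd b" by (simp add: c)
    then show ?thesis using assms c by (metis is_unit_const_poly_iff dvd_trans)
  qed
qed

lemma linear_poly_root_exists:
  fixes g :: "'a::comm_ring_1 poly"
  assumes "degree g \<le> 1" and "coeff g 1 dvd 1"
  shows "\<exists>w. poly g w = 0"
proof -
  obtain v where v: "1 = coeff g 1 * v" using assms(2) by (elim dvdE)
  have g: "g = [:coeff g 0, coeff g 1:]"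
    using assms(1) by (intro poly_eqI) (auto simp: coeff_pCons coeff_eq_0 split: nat.split)
  have "poly g (- (coeff g 0 * v)) = coeff g 0 * (1 - coeff g 1 * v)"
    by (subst g) (simp add: algebra_simps)
  then show ?thesis using v by auto
qed

lemma root_if_irreducible_lead_coeff:
  fixes g h :: "'a::idom poly"
  assumes "irreducible (coeff (g * h) 2)" "degree g = 1" "degree h = 1"
  shows "\<exists>w. poly (g * h) w = 0"
proof -
  have "coeff (g * h) 2 = coeff g 1 * coeff h 1"
    using coeff_mult_degree_sum[of g h] assms(2,3) by (simp add: numeral_2_eq_2)
  with assms(1) have "coeff g 1 dvd 1 \<or> coeff h 1 dvd 1" by (metis irreducibleD)
  then obtain w where "poly g w = 0 \<or> poly h w = 0"
    using linear_poly_root_exists assms(2,3) by (metis order_refl)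
  then show ?thesis by auto
qed

lemma const_dvd_primitive_is_unit:
  fixes f g :: "'a::{semiring_gcd,idom} poly"
  assumes "content f = 1" "g dvd f" "degree g = 0"
  shows "g dvd 1"
proof -
  obtain c where "g = [:c:]" using assms(3) by (rule degree_eq_zeroE)
  with assms(1,2) show ?thesis by (simp add: const_poly_dvd_iff_dvd_content is_unit_const_poly_iff)
qed

lemma dvd_prime_elem_mult_cases:
  fixes p w m :: "'a::idom"
  assumes "prime_elem p" and "w dvd p * m"
  shows "w dvd m \<or> (\<exists>w'. w = p * w' \<and> w' dvd m)"
proof -
  obtain k where k: "p * m = w * k" using assms(2) by (elim dvdE)
  have "p \<noteq> 0" using assms(1) by (simp add: prime_elem_def)
  show ?thesis
  proof (cases "p dvd w")
    case True
    then obtain w' where w': "w = p * w'" by (elim dvdE)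
    then have "m = w' * k" using k \<open>p \<noteq> 0\<close> by (simp add: mult.assoc)
    then show ?thesis using w' by auto
  next
    case False
    then have "p dvd k" using k assms(1) prime_elem_dvd_multD by (metis dvd_triv_left)
    then obtain k' where "k = p * k'" by (elim dvdE)
    then have "m = w * k'" using k \<open>p \<noteq> 0\<close> by (simp add: algebra_simps)
    then show ?thesis by auto
  qed
qed

lemma dvd_prod_list_prime_elems:
  fixes w :: "'a::idom"
  assumes "\<forall>p\<in>set ps. prime_elem p" and "w dvd prod_list ps"
  shows "\<exists>u qs. u dvd 1 \<and> qs \<in> set (subseqs ps) \<and> w = prod_list qs * u"
  using assms
proof (induction ps arbitrary: w)
  case Nil
  then show ?case by (intro exI[of _ w] exI[of _ "[]"]) simp
next
  case (Cons p ps)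
  from dvd_prime_elem_mult_cases[of p w "prod_list ps"] Cons.prems
  consider "w dvd prod_list ps" | w' where "w = p * w'" "w' dvd prod_list ps" by auto
  then show ?case
  proof cases
    case 1
    with Cons obtain u qs where "u dvd 1" "qs \<in> set (subseqs ps)" "w = prod_list qs * u" by fastforce
    then show ?thesis by (intro exI[of _ u] exI[of _ qs]) (simp add: Let_def)
  next
    case 2
    with Cons obtain u qs where "u dvd 1" "qs \<in> set (subseqs ps)" "w' = prod_list qs * u" by fastforce
    with 2 show ?thesis by (intro exI[of _ u] exI[of _ "p # qs"]) (simp add: Let_def mult.assoc)
  qed
qed

section \<open>Bivariate polynomials\<close>

(* 'a poly poly is 'a[x][y], with y the outer variable. *)

definition const2 :: "'a::zero \<Rightarrow> 'a poly poly" where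
  "const2 c = [:[:c:]:]"

definition var_x :: "'a::comm_semiring_1 poly poly" where
  "var_x = [:[:0, 1:]:]"

definition var_y :: "'a::comm_semiring_1 poly poly" where
  "var_y = [:0, 1:]"

definition lin2 :: "'a::comm_semiring_1 \<Rightarrow> 'a \<Rightarrow> 'a poly poly" where
  "lin2 a b = const2 a * var_x + const2 b * var_y"

lemma lin2_pCons: "lin2 a b = [:[:0, a:], [:b:]:]"
  by (simp add: lin2_def const2_def var_x_def var_y_def)

definition eval2 :: "'a::comm_semiring_0 poly poly \<Rightarrow> 'a \<Rightarrow> 'a \<Rightarrow> 'a" where
  "eval2 P x y = poly (poly P [:y:]) x"

lemma eval2_0 [simp]: "eval2 0 x y = 0"
  and eval2_add [simp]: "eval2 (P + Q) x y = eval2 P x y + eval2 Q x y"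
  and eval2_mult [simp]: "eval2 (P * Q) x y = eval2 P x y * eval2 Q x y"
  and eval2_const2 [simp]: "eval2 (const2 c) x y = c"
  by (simp_all add: eval2_def const2_def)

lemma eval2_var_x [simp]: "eval2 var_x x y = x"
  and eval2_var_y [simp]: "eval2 var_y x y = y"
  and eval2_lin2 [simp]: "eval2 (lin2 a b) x y = a * x + b * y"
  for x y :: "'a::comm_semiring_1"
  by (simp_all add: eval2_def var_x_def var_y_def lin2_def const2_def algebra_simps)

lemma eval2_diff [simp]: "eval2 (P - Q) x y = eval2 P x y - eval2 Q x y"
  and eval2_minus [simp]: "eval2 (- P) x y = - eval2 P x y"
  for P Q :: "'a::comm_ring poly poly"
  by (simp_all add: eval2_def)

lemmas eval2_simps = eval2_add eval2_diff eval2_minus eval2_mult eval2_const2 eval2_lin2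
  eval2_var_x eval2_var_y

lemma const2_add: "const2 (a + b) = const2 a + const2 b"
  and const2_mult: "const2 (a * b) = const2 a * const2 b"
  and const2_1: "const2 1 = 1"
  and const2_0 [simp]: "const2 0 = 0"
  and const2_eq_0_iff [simp]: "const2 a = 0 \<longleftrightarrow> a = 0"
  by (simp_all add: const2_def one_pCons)

lemma const2_diff: "const2 (a - b) = const2 a - const2 b"
  and const2_minus: "const2 (- a) = - const2 a"
  by (simp_all add: const2_def)

lemma var_x_neq_0: "var_x \<noteq> 0"
  and var_y_neq_0: "var_y \<noteq> 0"
  by (simp_all add: var_x_def var_y_def)

lemma lin2_eq_0_iff: "lin2 a b = 0 \<longleftrightarrow> a = 0 \<and> b = 0"
  by (simp add: lin2_pCons)

lemma lin2_dvd_imp_eval2_eq_0: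
  fixes P :: "'a::comm_ring_1 poly poly"
  assumes "lin2 a b dvd P"
  shows "eval2 P b (- a) = 0"
  using assms by (auto simp: algebra_simps)

lemma is_unit_poly_poly_iff: "(u :: 'a::field poly poly) dvd 1 \<longleftrightarrow> (\<exists>c. c \<noteq> 0 \<and> u = const2 c)"
  by (auto simp: is_unit_poly_iff const2_def dvd_field_iff)

lemma is_unit_const2: "(c :: 'a::field) \<noteq> 0 \<Longrightarrow> const2 c dvd 1"
  by (auto simp: is_unit_poly_poly_iff)

lemma var_x_eq_lin2: "var_x = lin2 1 0"
  and var_y_eq_lin2: "var_y = lin2 0 1"
  by (simp_all add: lin2_def const2_1)

lemma irreducible_lin2:
  fixes a b :: "'a::field"
  assumes "a \<noteq> 0 \<or> b \<noteq> 0"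
  shows "irreducible (lin2 a b)"
proof (cases "b = 0")
  case True
  then have "irreducible [:0, a:]" using assms by (intro irreducible_linear_field_poly) auto
  then show ?thesis using True by (simp add: lin2_pCons irreducible_const_poly_iff)
next
  case False
  then show ?thesis unfolding lin2_pCons
    by (intro irreducible_linear_poly_unit) (simp add: is_unit_const_poly_iff dvd_field_iff)
qed

lemma irreducible_var_x: "irreducible (var_x :: 'a::field poly poly)"
  and irreducible_var_y: "irreducible (var_y :: 'a::field poly poly)"
  by (simp_all add: var_x_eq_lin2 var_y_eq_lin2 irreducible_lin2)

lemma lin2_mult_lin2_eq:
  fixes p1 p2 q1 q2 r1 r2 s1 s2 :: "'a::comm_ring_1"
  assumes "p1 * q1 = r1 * s1" "p1 * q2 + p2 * q1 = r1 * s2 + r2 * s1" "p2 * q2 = r2 * s2"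
  shows "lin2 p1 p2 * lin2 q1 q2 = lin2 r1 r2 * lin2 s1 s2"
proof -
  have expand: "lin2 a b * lin2 c d =
      const2 (a * c) * var_x^2 + const2 (a * d + b * c) * var_x * var_y + const2 (b * d) * var_y^2"
    for a b c d :: 'a
    unfolding lin2_def const2_mult const2_add by (simp add: algebra_simps power2_eq_square)
  show ?thesis unfolding expand assms ..
qed

section \<open>The Spohn cubic as a quadratic in z\<close>

(* The Spohn cubic in the coordinates a22 = b12 = 0. *)
definition spohn_quadratic :: "'a::comm_ring_1 \<Rightarrow> 'a \<Rightarrow> 'a \<Rightarrow> 'a \<Rightarrow> 'a \<Rightarrow> 'a \<Rightarrow> 'a poly poly poly" where
  "spohn_quadratic a11 a12 a21 b11 b21 b22 =
     [:const2 b11 * var_x * var_y * lin2 a11 a12,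
       const2 b21 * var_y * lin2 a11 a12 - const2 (b11 - b22) * var_x * lin2 (a11 - a21) (a12 - a21),
       - const2 (b21 - b22) * lin2 (a11 - a21) (a12 - a21):]"

lemma poly_spohn_quadratic:
  "poly (spohn_quadratic a11 a12 a21 b11 b21 b22) w =
     var_y * lin2 a11 a12 * (const2 b11 * var_x + const2 b21 * w)
     - w * lin2 (a11 - a21) (a12 - a21) * (const2 (b11 - b22) * var_x + const2 (b21 - b22) * w)"
  unfolding spohn_quadratic_def const2_diff by (simp add: algebra_simps)

lemma spohn_cubic_eq_quadratic:
  "spohn_cubic a11 a12 a21 a22 b11 b12 b21 b22 =
   spohn_quadratic (of_real (a11 - a22)) (of_real (a12 - a22)) (of_real (a21 - a22))
     (of_real (b11 - b12)) (of_real (b21 - b12)) (of_real (b22 - b12))"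
proof -
  have quadratic: "[:c, b, a:] = [:c:] + pZ * [:b:] + pZ^2 * [:a:]" for a b c :: "complex poly poly"
    by (simp add: pZ_def power2_eq_square)
  have lift: "pX = [:var_x:]" "pY = [:var_y:]" "cst r = [:const2 (of_real r):]" for r
    by (simp_all add: pX_def pY_def var_x_def var_y_def cst_def const2_def)
  have hom: "[:p + q:] = [:p:] + [:q:]" "[:p - q:] = [:p:] - [:q:]" "[:- p:] = - [:p:]"
    "[:p * q:] = [:p:] * [:q:]" for p q :: "complex poly poly"
    by simp_all
  show ?thesis
    unfolding spohn_quadratic_def quadratic
    unfolding spohn_cubic_def Let_def lift lin2_def hom
      of_real_add of_real_diff of_real_mult const2_add const2_diff const2_mult
    by algebra
qed

definition spohn_condition_9 :: "'a::comm_ring_1 \<Rightarrow> 'a \<Rightarrow> 'a \<Rightarrow> 'a \<Rightarrow> 'a \<Rightarrow> 'a \<Rightarrow> 'a \<Rightarrow> 'a \<Rightarrow> bool" where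
  "spohn_condition_9 a11 a12 a21 a22 b11 b12 b21 b22 \<longleftrightarrow>
     a12 * (b12 - b22) + a21 * (b22 - b21) + a22 * (b21 - b12) = 0 \<and>
     a11 * (b22 - b12) + a21 * (b11 - b22) + a22 * (b12 - b11) = 0 \<and>
     a11 * (b22 - b21) + a12 * (b11 - b22) + a22 * (b21 - b11) = 0"

definition spohn_condition_10 :: "'a::comm_ring_1 \<Rightarrow> 'a \<Rightarrow> 'a \<Rightarrow> 'a \<Rightarrow> 'a \<Rightarrow> 'a \<Rightarrow> 'a \<Rightarrow> 'a \<Rightarrow> bool" where
  "spohn_condition_10 a11 a12 a21 a22 b11 b12 b21 b22 \<longleftrightarrow>
     a11 * (b12 - b21) + a12 * (b21 - b22) + a21 * (b22 - b12) = 0 \<and>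
     a12 * (b11 - b21) + a21 * (b12 - b11) + a22 * (b21 - b12) = 0 \<and>
     a11 * (b11 - b21) + a21 * (b22 - b11) + a22 * (b21 - b22) = 0"

definition spohn_condition_11 :: "'a::comm_ring_1 \<Rightarrow> 'a \<Rightarrow> 'a \<Rightarrow> 'a \<Rightarrow> 'a \<Rightarrow> 'a \<Rightarrow> 'a \<Rightarrow> 'a \<Rightarrow> bool" where
  "spohn_condition_11 a11 a12 a21 a22 b11 b12 b21 b22 \<longleftrightarrow>
     a12 * (b22 - b21) + a21 * (b12 - b22) + a22 * (b21 - b12) = 0 \<and>
     a11 * (b22 - b21) + a21 * (b11 - b22) + a22 * (b21 - b11) = 0 \<and>
     a11 * (b22 - b12) + a12 * (b11 - b22) + a22 * (b12 - b11) = 0"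

definition spohn_condition_12 :: "'a::comm_ring_1 \<Rightarrow> 'a \<Rightarrow> 'a \<Rightarrow> 'a \<Rightarrow> 'a \<Rightarrow> 'a \<Rightarrow> 'a \<Rightarrow> 'a \<Rightarrow> bool" where
  "spohn_condition_12 a11 a12 a21 a22 b11 b12 b21 b22 \<longleftrightarrow>
     a11 * (b12 - b21) + a12 * (b22 - b12) + a21 * (b21 - b22) = 0 \<and>
     a12 * (b11 - b12) + a21 * (b21 - b11) + a22 * (b12 - b21) = 0 \<and>
     a11 * (b11 - b21) + a12 * (b22 - b12) + a21 * (b21 - b11) + a22 * (b12 - b22) = 0"

definition spohn_reducibility_condition ::
    "'a::comm_ring_1 \<Rightarrow> 'a \<Rightarrow> 'a \<Rightarrow> 'a \<Rightarrow> 'a \<Rightarrow> 'a \<Rightarrow> 'a \<Rightarrow> 'a \<Rightarrow> bool" where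
  "spohn_reducibility_condition a11 a12 a21 a22 b11 b12 b21 b22 \<longleftrightarrow>
     a11 = a12 \<or> a11 = a21 \<or> a21 = a22 \<or> b11 = b12 \<or> b11 = b21 \<or> b12 = b22 \<or>
     (a12 = a22 \<and> b21 = b22) \<or> (a12 = a21 \<and> b12 = b21) \<or>
     spohn_condition_9 a11 a12 a21 a22 b11 b12 b21 b22 \<or> spohn_condition_10 a11 a12 a21 a22 b11 b12 b21 b22 \<or>
     spohn_condition_11 a11 a12 a21 a22 b11 b12 b21 b22 \<or> spohn_condition_12 a11 a12 a21 a22 b11 b12 b21 b22"

lemmas spohn_condition_defs =
  spohn_condition_9_def spohn_condition_10_def spohn_condition_11_def spohn_condition_12_def

lemma spohn_reducibility_condition_normalize:
  "spohn_reducibility_condition a11 a12 a21 a22 b11 b12 b21 b22 \<longleftrightarrow>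
   spohn_reducibility_condition (a11 - a22) (a12 - a22) (a21 - a22) 0 (b11 - b12) 0 (b21 - b12) (b22 - b12)"
  unfolding spohn_reducibility_condition_def spohn_condition_defs by (simp add: algebra_simps)

lemma spohn_reducibility_condition_of_real:
  "spohn_reducibility_condition (of_real a11 :: 'a::{real_algebra_1,comm_ring_1}) (of_real a12) (of_real a21)
     (of_real a22) (of_real b11) (of_real b12) (of_real b21) (of_real b22) \<longleftrightarrow>
   spohn_reducibility_condition a11 a12 a21 a22 b11 b12 b21 b22"
  unfolding spohn_reducibility_condition_def spohn_condition_defs
  by (simp only: of_real_eq_iff of_real_eq_0_iff flip: of_real_diff of_real_mult of_real_add)

section \<open>Sufficiency of the conditions\<close>

definition eval_origin :: "'a::comm_semiring_0 poly poly poly \<Rightarrow> 'a" where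
  "eval_origin p = eval2 (poly p 0) 0 0"

lemma reducible_if_factors_vanish_at_origin:
  fixes f :: "'a::comm_semiring_1 poly poly poly"
  assumes "f \<noteq> 0" "f = l * q" "eval_origin l = 0" "eval_origin q = 0"
  shows "reducible f"
proof -
  have mult: "eval_origin (p * q) = eval_origin p * eval_origin q" for p q :: "'a poly poly poly"
    by (simp add: eval_origin_def)
  have unit: "eval_origin u \<noteq> 0" if "u dvd 1" for u :: "'a poly poly poly"
  proof -
    from that obtain v where "u * v = 1" by (metis dvdE)
    then have "eval_origin (u * v) = 1" by (simp add: eval_origin_def eval2_def)
    then show ?thesis by (auto simp: mult)
  qed
  have "eval_origin f = 0" using assms(2,3) by (simp add: eval_origin_def)
  with assms unit show ?thesis
    unfolding reducible_def by (metis irreducibleD)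
qed

lemma reducible_spohn_quadratic_if_root:
  fixes w :: "'a::comm_ring_1 poly poly"
  assumes "spohn_quadratic a11 a12 a21 b11 b21 b22 \<noteq> 0"
    and "poly (spohn_quadratic a11 a12 a21 b11 b21 b22) w = 0" and "eval2 w 0 0 = 0"
  shows "reducible (spohn_quadratic a11 a12 a21 b11 b21 b22)"
proof (rule reducible_if_factors_vanish_at_origin[OF assms(1)])
  let ?f = "spohn_quadratic a11 a12 a21 b11 b21 b22"
  show "?f = [:- w, 1:] * synthetic_div ?f w"
    using synthetic_div_correct'[of w ?f] assms(2) by simp
  show "eval_origin [:- w, 1:] = 0" and "eval_origin (synthetic_div ?f w) = 0"
    using assms(3) by (simp_all add: eval_origin_def spohn_quadratic_def)
qed

lemma reducible_spohn_quadratic_degenerate: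
  fixes a11 a12 a21 b11 b21 b22 :: "'a::comm_ring_1"
  assumes "spohn_quadratic a11 a12 a21 b11 b21 b22 \<noteq> 0"
    and "a11 = a12 \<or> a11 = a21 \<or> a21 = 0 \<or> b11 = 0 \<or> b11 = b21 \<or> b22 = 0 \<or>
      (a12 = 0 \<and> b21 = b22) \<or> (a12 = a21 \<and> b21 = 0)"
  shows "reducible (spohn_quadratic a11 a12 a21 b11 b21 b22)"
  using assms(2)
proof (elim disjE conjE)
  note factors = reducible_if_factors_vanish_at_origin[OF assms(1)]
  note root = reducible_spohn_quadratic_if_root[OF assms(1)]
  note expand = spohn_quadratic_def lin2_def const2_add const2_mult const2_diff const2_minus const2_1
  show ?thesis if "a11 = a12"
    by (rule factors[of "[:lin2 1 1:]" "[:const2 (b11 * a11) * var_x * var_y,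
        const2 (b21 * a11) * var_y - const2 ((b11 - b22) * (a11 - a21)) * var_x,
        - const2 ((b21 - b22) * (a11 - a21)):]"])
      (use that in \<open>simp_all add: expand eval_origin_def algebra_simps\<close>)
  show ?thesis if "a11 = a21"
    by (rule factors[of "[:var_y:]" "[:const2 b11 * var_x * lin2 a11 a12,
        const2 b21 * lin2 a11 a12 - const2 ((b11 - b22) * (a12 - a21)) * var_x,
        - const2 ((b21 - b22) * (a12 - a21)):]"])
      (use that in \<open>simp_all add: expand eval_origin_def algebra_simps\<close>)
  show ?thesis if "a21 = 0"
    by (rule factors[of "[:lin2 a11 a12:]" "[:const2 b11 * var_x * var_y,
        const2 b21 * var_y - const2 (b11 - b22) * var_x, - const2 (b21 - b22):]"])
      (use that in \<open>simp_all add: expand eval_origin_def algebra_simps\<close>)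
  show ?thesis if "b11 = 0"
    by (rule root[of 0]) (use that in \<open>simp_all add: spohn_quadratic_def\<close>)
  show ?thesis if "b11 = b21"
    by (rule root[of "- var_x"]) (use that in \<open>simp_all add: poly_spohn_quadratic algebra_simps\<close>)
  show ?thesis if "b22 = 0"
    by (rule factors[of "[:const2 b11 * var_x, const2 b21:]" "[:var_y * lin2 a11 a12, - lin2 (a11 - a21) (a12 - a21):]"])
      (use that in \<open>simp_all add: expand eval_origin_def algebra_simps\<close>)
  show ?thesis if "a12 = 0" "b21 = b22"
    by (rule factors[of "[:var_x:]" "[:const2 (b11 * a11) * var_x * var_y,
        const2 (b21 * a11) * var_y - const2 (b11 - b22) * lin2 (a11 - a21) (- a21):]"])
      (use that in \<open>simp_all add: expand eval_origin_def algebra_simps\<close>)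
  show ?thesis if "a12 = a21" "b21 = 0"
    by (rule factors[of "[:var_x:]" "[:const2 b11 * var_y * lin2 a11 a12,
        - const2 ((b11 - b22) * (a11 - a21)) * var_x, const2 (b22 * (a11 - a21)):]"])
      (use that in \<open>simp_all add: expand eval_origin_def algebra_simps\<close>)
qed

lemma reducible_spohn_quadratic_if_root_y:
  fixes a11 a12 a21 b11 b21 b22 k :: "'a::comm_ring_1"
  assumes "spohn_quadratic a11 a12 a21 b11 b21 b22 \<noteq> 0"
    and "lin2 b11 (b21 * k) * lin2 a11 a12 =
      lin2 (k * (a11 - a21)) (k * (a12 - a21)) * lin2 (b11 - b22) ((b21 - b22) * k)"
  shows "reducible (spohn_quadratic a11 a12 a21 b11 b21 b22)"
proof (rule reducible_spohn_quadratic_if_root[OF assms(1)])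
  have "poly (spohn_quadratic a11 a12 a21 b11 b21 b22) (const2 k * var_y) =
      var_y * (lin2 b11 (b21 * k) * lin2 a11 a12 -
        lin2 (k * (a11 - a21)) (k * (a12 - a21)) * lin2 (b11 - b22) ((b21 - b22) * k))"
    unfolding poly_spohn_quadratic lin2_def const2_mult const2_diff by (simp add: algebra_simps)
  with assms(2) show "poly (spohn_quadratic a11 a12 a21 b11 b21 b22) (const2 k * var_y) = 0"
    by simp
qed simp

lemma reducible_spohn_quadratic_if_root_T:
  fixes a11 a12 a21 b11 b21 b22 k :: "'a::comm_ring_1"
  assumes "spohn_quadratic a11 a12 a21 b11 b21 b22 \<noteq> 0"
    and "lin2 0 1 * lin2 (b11 + b21 * k * a11) (b21 * k * a12) =
      lin2 (k * (a11 - a21)) (k * (a12 - a21)) *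
      lin2 ((b11 - b22) + (b21 - b22) * k * a11) ((b21 - b22) * k * a12)"
  shows "reducible (spohn_quadratic a11 a12 a21 b11 b21 b22)"
proof (rule reducible_spohn_quadratic_if_root[OF assms(1)])
  have "poly (spohn_quadratic a11 a12 a21 b11 b21 b22) (const2 k * lin2 a11 a12) =
      lin2 a11 a12 * (lin2 0 1 * lin2 (b11 + b21 * k * a11) (b21 * k * a12) -
        lin2 (k * (a11 - a21)) (k * (a12 - a21)) *
        lin2 ((b11 - b22) + (b21 - b22) * k * a11) ((b21 - b22) * k * a12))"
    unfolding poly_spohn_quadratic lin2_def const2_add const2_mult const2_diff const2_0 const2_1
    by (simp add: algebra_simps)
  with assms(2) show "poly (spohn_quadratic a11 a12 a21 b11 b21 b22) (const2 k * lin2 a11 a12) = 0"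
    by simp
qed simp

lemma reducible_spohn_quadratic_if_condition:
  fixes a11 a12 a21 b11 b21 b22 :: "'a::field"
  assumes f0: "spohn_quadratic a11 a12 a21 b11 b21 b22 \<noteq> 0"
    and "spohn_reducibility_condition a11 a12 a21 0 b11 0 b21 b22"
  shows "reducible (spohn_quadratic a11 a12 a21 b11 b21 b22)"
proof -
  note degenerate = reducible_spohn_quadratic_degenerate[OF f0]
  note root_y = reducible_spohn_quadratic_if_root_y[OF f0]
  note root_T = reducible_spohn_quadratic_if_root_T[OF f0]
  from assms(2) consider
      "a11 = a12 \<or> a11 = a21 \<or> a21 = 0 \<or> b11 = 0 \<or> b11 = b21 \<or> b22 = 0 \<or>
        (a12 = 0 \<and> b21 = b22) \<or> (a12 = a21 \<and> b21 = 0)"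
    | "spohn_condition_9 a11 a12 a21 0 b11 0 b21 b22" | "spohn_condition_10 a11 a12 a21 0 b11 0 b21 b22"
    | "spohn_condition_11 a11 a12 a21 0 b11 0 b21 b22" | "spohn_condition_12 a11 a12 a21 0 b11 0 b21 b22"
    unfolding spohn_reducibility_condition_def by auto
  then show ?thesis
  proof cases
    case 1
    then show ?thesis by (rule degenerate)
  next
    case 2
    show ?thesis
      by (rule root_y[of 1], rule lin2_mult_lin2_eq;
          use 2 in \<open>unfold spohn_condition_9_def, algebra\<close>)
  next
    case 3
    show ?thesis
    proof (cases "b21 = b22")
      case True
      with 3 have "a11 = a21 \<or> b22 = 0" by (auto simp: spohn_condition_10_def algebra_simps)
      then show ?thesis using degenerate by auto
    next
      case False
      define k where "k = b11 / (b21 - b22)"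
      have k: "b11 = k * (b21 - b22)" using False by (simp add: k_def)
      show ?thesis
        by (rule root_y[of k], rule lin2_mult_lin2_eq;
            use 3 k in \<open>unfold spohn_condition_10_def, algebra\<close>)
    qed
  next
    case 4
    show ?thesis
    proof (cases "a21 = 0")
      case False
      define k where "k = - 1 / a21"
      have k: "k * a21 = - 1" using False by (simp add: k_def)
      show ?thesis
        by (rule root_T[of k], rule lin2_mult_lin2_eq;
            use 4 k in \<open>unfold spohn_condition_11_def, algebra\<close>)
    qed (use degenerate in auto)
  next
    case 5
    show ?thesis
    proof (cases "a11 = a12")
      case False
      define k where "k = - 1 / (a11 - a12)"
      have k: "k * (a11 - a12) = - 1" using False by (simp add: k_def)
      show ?thesis
        by (rule root_T[of k], rule lin2_mult_lin2_eq;
            use 5 k in \<open>unfold spohn_condition_12_def, algebra\<close>)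
    qed (use degenerate in auto)
  qed
qed

section \<open>Necessity of the conditions\<close>

(* Conditions (1)-(8) all fail, in the coordinates a22 = b12 = 0. *)
locale spohn_nondegenerate =
  fixes a11 a12 a21 b11 b21 b22 :: complex
  assumes a11_neq_a12: "a11 \<noteq> a12" and a11_neq_a21: "a11 \<noteq> a21" and a21_neq_0: "a21 \<noteq> 0"
    and b11_neq_0: "b11 \<noteq> 0" and b11_neq_b21: "b11 \<noteq> b21" and b22_neq_0: "b22 \<noteq> 0"
    and not_a12_0_b21_b22: "\<not> (a12 = 0 \<and> b21 = b22)"
    and not_a12_a21_b21_0: "\<not> (a12 = a21 \<and> b21 = 0)"
begin

abbreviation F :: "complex poly poly poly" where
  "F \<equiv> spohn_quadratic a11 a12 a21 b11 b21 b22"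

abbreviation T :: "complex poly poly" where
  "T \<equiv> lin2 a11 a12"

abbreviation V :: "complex poly poly" where
  "V \<equiv> lin2 (a11 - a21) (a12 - a21)"

(* The two linear forms in x and z occurring in f are not proportional. *)
lemma det_b_neq_0: "b11 * (b21 - b22) - b21 * (b11 - b22) \<noteq> 0"
proof -
  have "b11 * (b21 - b22) - b21 * (b11 - b22) = b22 * (b21 - b11)" by (simp add: algebra_simps)
  then show ?thesis using b11_neq_b21 b22_neq_0 by auto
qed

lemma T_neq_0: "T \<noteq> 0"
  using a11_neq_a12 by (auto simp: lin2_eq_0_iff)

lemma irreducible_T: "irreducible T" and irreducible_V: "irreducible V"
  using a11_neq_a12 a11_neq_a21 by (auto intro: irreducible_lin2)

lemma coeff0_F: "coeff F 0 = const2 b11 * prod_list [var_x, var_y, T]"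
  by (simp add: spohn_quadratic_def mult.assoc)

lemma coeff1_F: "coeff F 1 = const2 b21 * var_y * T - const2 (b11 - b22) * var_x * V"
  and coeff2_F: "coeff F 2 = const2 (b22 - b21) * V"
  by (simp_all add: spohn_quadratic_def numeral_2_eq_2 const2_diff algebra_simps)

lemma F_neq_0: "F \<noteq> 0"
proof
  assume "F = 0"
  then have "coeff F 0 = 0" by simp
  then show False using b11_neq_0 T_neq_0 by (simp add: coeff0_F var_x_def var_y_def)
qed

lemma no_common_linear_factor:
  shows "\<not> (var_x dvd coeff F 1 \<and> var_x dvd coeff F 2)"
    and "\<not> (var_y dvd coeff F 1 \<and> var_y dvd coeff F 2)"
    and "\<not> (T dvd coeff F 1 \<and> T dvd coeff F 2)"
proof
  assume "var_x dvd coeff F 1 \<and> var_x dvd coeff F 2"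
  then have "eval2 (coeff F 1) 0 (- 1) = 0" "eval2 (coeff F 2) 0 (- 1) = 0"
    unfolding var_x_eq_lin2 by (auto dest!: lin2_dvd_imp_eval2_eq_0)
  then have "b21 * a12 = 0" "(b21 - b22) * (a12 - a21) = 0"
    unfolding coeff1_F coeff2_F eval2_simps by algebra+
  then show False
    using a21_neq_0 b22_neq_0 not_a12_0_b21_b22 not_a12_a21_b21_0 by auto
next
  show "\<not> (var_y dvd coeff F 1 \<and> var_y dvd coeff F 2)"
  proof
    assume "var_y dvd coeff F 1 \<and> var_y dvd coeff F 2"
    then have "eval2 (coeff F 1) 1 0 = 0" "eval2 (coeff F 2) 1 0 = 0"
      unfolding var_y_eq_lin2 by (auto dest!: lin2_dvd_imp_eval2_eq_0)
    then have "(b11 - b22) * (a11 - a21) = 0" "(b21 - b22) * (a11 - a21) = 0"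
      unfolding coeff1_F coeff2_F eval2_simps by algebra+
    then show False
      using a11_neq_a21 b11_neq_b21 by auto
  qed
next
  show "\<not> (T dvd coeff F 1 \<and> T dvd coeff F 2)"
  proof
    assume "T dvd coeff F 1 \<and> T dvd coeff F 2"
    then have "eval2 (coeff F 1) a12 (- a11) = 0" "eval2 (coeff F 2) a12 (- a11) = 0"
      by (auto dest!: lin2_dvd_imp_eval2_eq_0)
    then have "(b21 - b22) * a21 * (a11 - a12) = 0" "(b11 - b22) * a12 * a21 * (a11 - a12) = 0"
      unfolding coeff1_F coeff2_F eval2_simps by algebra+
    then show False
      using a11_neq_a12 a21_neq_0 b11_neq_b21 not_a12_0_b21_b22 by auto
  qed
qed

lemma content_F: "content F = 1"
proof (rule ccontr)
  assume "content F \<noteq> 1"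
  then obtain p where "p dvd content F" "prime p"
    using prime_divisor_exists[of "content F"] F_neq_0 by auto
  then have p: "prime_elem p" "\<not> p dvd 1" and dvd: "\<And>i. p dvd coeff F i"
    using content_dvd_coeff dvd_trans prime_imp_prime_elem prime_elem_not_unit by blast+
  have common: "l dvd coeff F i" if "irreducible l" "p dvd l" for l i
    using irreducibleD'[OF that(1,2)] p dvd_trans[OF _ dvd] by blast
  have "\<not> p dvd const2 b11"
    using p is_unit_const2[OF b11_neq_0] dvd_unit_imp_unit by blast
  with dvd[of 0] p(1) have "p dvd var_x \<or> p dvd var_y \<or> p dvd T"
    unfolding coeff0_F by (simp add: prime_elem_dvd_mult_iff)
  then show False
    using common irreducible_var_x irreducible_var_y irreducible_T no_common_linear_factor by blast
qed

lemma root_if_reducible: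
  assumes "reducible F"
  shows "b21 \<noteq> b22 \<and> (\<exists>w. poly F w = 0)"
proof -
  obtain g h where F: "F = g * h" and g: "\<not> g dvd 1" and h: "\<not> h dvd 1"
    using assms unfolding reducible_def irreducible_def by blast
  have "degree g \<noteq> 0"
    using const_dvd_primitive_is_unit[OF content_F, of g] g by (auto simp: F)
  moreover have "degree h \<noteq> 0"
    using const_dvd_primitive_is_unit[OF content_F, of h] h by (auto simp: F)
  moreover have "degree F \<le> 2"
    by (simp add: spohn_quadratic_def)
  moreover have "degree F = degree g + degree h"
    using F F_neq_0 by (simp add: degree_mult_eq)
  ultimately have deg: "degree g = 1" "degree h = 1" "degree F = 2"
    by linarith+
  then have "coeff F 2 \<noteq> 0"
    using F_neq_0 by (metis leading_coeff_0_iff)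
  then have "b21 \<noteq> b22"
    by (auto simp: coeff2_F)
  then have "const2 (b22 - b21) dvd 1"
    by (simp add: is_unit_const2)
  then have "irreducible (coeff F 2)"
    unfolding coeff2_F using irreducible_V by (simp add: irreducible_mult_unit_left)
  then have "\<exists>w. poly (g * h) w = 0"
    by (intro root_if_irreducible_lead_coeff) (use F deg in simp_all)
  with \<open>b21 \<noteq> b22\<close> show ?thesis by (simp add: F)
qed

lemma root_eq_scaled_subproduct:
  assumes "poly F w = 0"
  obtains k qs where "k \<noteq> 0" "qs \<in> set (subseqs [var_x, var_y, T])" "w = prod_list qs * const2 k"
proof -
  have "coeff F 0 = w * - (coeff F 1 + w * coeff F 2)"
    using assms by (simp add: spohn_quadratic_def numeral_2_eq_2 algebra_simps)
  then have "w dvd const2 b11 * prod_list [var_x, var_y, T]"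
    unfolding coeff0_F by (rule dvdI)
  moreover have "const2 b11 dvd 1"
    using b11_neq_0 by (rule is_unit_const2)
  ultimately have "w dvd prod_list [var_x, var_y, T]"
    by (simp add: dvd_mult_unit_iff')
  moreover have "\<forall>p\<in>set [var_x, var_y, T]. prime_elem p"
    using irreducible_var_x irreducible_var_y irreducible_T by (simp add: prime_elem_iff_irreducible)
  ultimately obtain u qs where "u dvd 1" "qs \<in> set (subseqs [var_x, var_y, T])" "w = prod_list qs * u"
    using dvd_prod_list_prime_elems by blast
  moreover from \<open>u dvd 1\<close> obtain k where "k \<noteq> 0" "u = const2 k"
    by (auto simp: is_unit_poly_poly_iff)
  ultimately show ?thesis using that by simp
qed

lemma poly_F_const2_neq_0:
  assumes "k \<noteq> 0" "b21 \<noteq> b22"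
  shows "poly F (const2 k) \<noteq> 0"
proof
  assume "poly F (const2 k) = 0"
  then have e: "eval2 (poly F (const2 k)) 1 0 = 0" "eval2 (poly F (const2 k)) 2 0 = 0"
    by simp_all
  have "k * (a11 - a21) * ((b11 - b22) + (b21 - b22) * k) = 0"
    "k * (a11 - a21) * (2 * (b11 - b22) + (b21 - b22) * k) = 0"
    using e unfolding poly_spohn_quadratic eval2_simps by algebra+
  then have "(b11 - b22) + (b21 - b22) * k = 0" "2 * (b11 - b22) + (b21 - b22) * k = 0"
    using assms(1) a11_neq_a21 by auto
  then have "(b21 - b22) * k = 0" by algebra
  with assms show False by simp
qed

lemma poly_F_x_neq_0:
  assumes "k \<noteq> 0"
  shows "poly F (var_x * const2 k) \<noteq> 0"
proof
  define Q where "Q = var_y * T * (const2 b11 + const2 b21 * const2 k)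
    - const2 k * V * var_x * (const2 (b11 - b22) + const2 (b21 - b22) * const2 k)"
  assume "poly F (var_x * const2 k) = 0"
  moreover have "poly F (var_x * const2 k) = var_x * Q"
    unfolding poly_spohn_quadratic Q_def by algebra
  ultimately have "Q = 0" by (simp add: var_x_neq_0 var_y_neq_0)
  then have "eval2 Q 1 0 = 0" "eval2 Q 0 1 = 0" "eval2 Q 1 1 = 0" by simp_all
  then have "k * (a11 - a21) * ((b11 - b22) + (b21 - b22) * k) = 0" "a12 * (b11 + b21 * k) = 0"
    "(a11 + a12) * (b11 + b21 * k) - k * ((a11 - a21) + (a12 - a21)) * ((b11 - b22) + (b21 - b22) * k) = 0"
    unfolding Q_def eval2_simps by algebra+
  then have W: "(b11 - b22) + (b21 - b22) * k = 0" and a12: "a12 * (b11 + b21 * k) = 0"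
    and "(a11 + a12) * (b11 + b21 * k) = 0"
    using assms a11_neq_a21 by auto
  then have "a11 * (b11 + b21 * k) = 0" by algebra
  with a12 have S: "b11 + b21 * k = 0"
    using a11_neq_a12 by auto
  have "b11 * (b21 - b22) - b21 * (b11 - b22) = 0"
    using W S by algebra
  with det_b_neq_0 show False ..
qed

lemma poly_F_xy_neq_0:
  assumes "k \<noteq> 0"
  shows "poly F (var_x * var_y * const2 k) \<noteq> 0"
proof
  define Q where "Q = T * (const2 b11 + const2 b21 * var_y * const2 k)
    - const2 k * V * (const2 (b11 - b22) * var_x + const2 (b21 - b22) * var_x * var_y * const2 k)"
  assume "poly F (var_x * var_y * const2 k) = 0"
  moreover have "poly F (var_x * var_y * const2 k) = var_x * var_y * Q"
    unfolding poly_spohn_quadratic Q_def by algebra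
  ultimately have "Q = 0" by (simp add: var_x_neq_0 var_y_neq_0)
  then have "eval2 Q 0 1 = 0" "eval2 Q 0 2 = 0" "eval2 Q 1 0 = 0" "eval2 Q 2 0 = 0" by simp_all
  then have "a12 * (b11 + b21 * k) = 0" "a12 * (b11 + 2 * b21 * k) = 0"
    "a11 * b11 - k * (a11 - a21) * (b11 - b22) = 0" "a11 * b11 - 2 * k * (a11 - a21) * (b11 - b22) = 0"
    unfolding Q_def eval2_simps by algebra+
  moreover have "b11 + b21 * k \<noteq> 0 \<or> b11 + 2 * b21 * k \<noteq> 0"
    using b11_neq_0 by algebra
  ultimately have "a12 = 0" "a11 * b11 = 0" by auto
  with a11_neq_a12 b11_neq_0 show False by simp
qed

lemma poly_F_xT_neq_0:
  assumes "k \<noteq> 0"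
  shows "poly F (var_x * T * const2 k) \<noteq> 0"
proof
  define Q where "Q = var_y * (const2 b11 + const2 b21 * T * const2 k)
    - const2 k * V * (const2 (b11 - b22) * var_x + const2 (b21 - b22) * var_x * T * const2 k)"
  assume "poly F (var_x * T * const2 k) = 0"
  moreover have "poly F (var_x * T * const2 k) = var_x * T * Q"
    unfolding poly_spohn_quadratic Q_def by algebra
  ultimately have "Q = 0" by (simp add: var_x_neq_0 var_y_neq_0 T_neq_0)
  then have "eval2 Q 0 1 = 0" "eval2 Q 0 2 = 0" by simp_all
  then have "b11 + b21 * k * a12 = 0" "b11 + 2 * b21 * k * a12 = 0"
    unfolding Q_def eval2_simps by algebra+
  then have "b11 = 0" by algebra
  with b11_neq_0 show False ..
qed

lemma poly_F_yT_neq_0: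
  assumes "k \<noteq> 0"
  shows "poly F (var_y * T * const2 k) \<noteq> 0"
proof
  define Q where "Q = const2 b11 * var_x + const2 b21 * var_y * T * const2 k
    - const2 k * V * (const2 (b11 - b22) * var_x + const2 (b21 - b22) * var_y * T * const2 k)"
  assume "poly F (var_y * T * const2 k) = 0"
  moreover have "poly F (var_y * T * const2 k) = var_y * T * Q"
    unfolding poly_spohn_quadratic Q_def by algebra
  ultimately have "Q = 0" by (simp add: var_x_neq_0 var_y_neq_0 T_neq_0)
  then have "eval2 Q 1 0 = 0" "eval2 Q 2 0 = 0" by simp_all
  then have "b11 - k * (a11 - a21) * (b11 - b22) = 0" "b11 - 2 * k * (a11 - a21) * (b11 - b22) = 0"
    unfolding Q_def eval2_simps by algebra+
  then have "b11 = 0" by algebra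
  with b11_neq_0 show False ..
qed

lemma poly_F_xyT_neq_0:
  assumes "k \<noteq> 0"
  shows "poly F (var_x * var_y * T * const2 k) \<noteq> 0"
proof
  define Q where "Q = const2 b11 + const2 b21 * var_y * T * const2 k
    - const2 k * V * var_x * (const2 (b11 - b22) + const2 (b21 - b22) * var_y * T * const2 k)"
  assume "poly F (var_x * var_y * T * const2 k) = 0"
  moreover have "poly F (var_x * var_y * T * const2 k) = var_x * var_y * T * Q"
    unfolding poly_spohn_quadratic Q_def by algebra
  ultimately have "Q = 0" by (simp add: var_x_neq_0 var_y_neq_0 T_neq_0)
  then have "eval2 Q 0 0 = 0" by simp
  then have "b11 = 0" unfolding Q_def eval2_simps by algebra
  with b11_neq_0 show False ..
qed

lemma y_root_equations:
  assumes "poly F (var_y * const2 k) = 0" "k \<noteq> 0"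
  shows "a11 * b11 - k * (a11 - a21) * (b11 - b22) = 0"
    and "a12 * b21 - k * (a12 - a21) * (b21 - b22) = 0"
    and "a12 * b11 + a11 * b21 * k - (a11 - a21) * (b21 - b22) * k^2 - (a12 - a21) * (b11 - b22) * k = 0"
proof -
  define Q where "Q = T * (const2 b11 * var_x + const2 b21 * var_y * const2 k)
    - const2 k * V * (const2 (b11 - b22) * var_x + const2 (b21 - b22) * var_y * const2 k)"
  have "poly F (var_y * const2 k) = var_y * Q"
    unfolding poly_spohn_quadratic Q_def by algebra
  with assms(1) have "Q = 0" by (simp add: var_y_neq_0)
  then have "eval2 Q 1 0 = 0" "eval2 Q 0 1 = 0" "eval2 Q 1 1 = 0" by simp_all
  then have q10: "a11 * b11 - k * (a11 - a21) * (b11 - b22) = 0"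
    and "k * (a12 * b21 - k * (a12 - a21) * (b21 - b22)) = 0"
    and q11: "(a11 + a12) * (b11 + b21 * k) - k * ((a11 - a21) + (a12 - a21)) * ((b11 - b22) + (b21 - b22) * k) = 0"
    unfolding Q_def eval2_simps by algebra+
  then have q01: "a12 * b21 - k * (a12 - a21) * (b21 - b22) = 0"
    using assms(2) by simp
  show "a11 * b11 - k * (a11 - a21) * (b11 - b22) = 0" by (fact q10)
  show "a12 * b21 - k * (a12 - a21) * (b21 - b22) = 0" by (fact q01)
  show "a12 * b11 + a11 * b21 * k - (a11 - a21) * (b21 - b22) * k^2 - (a12 - a21) * (b11 - b22) * k = 0"
    using q10 q01 q11 by algebra
qed

lemma y_root_b11_eq_b22:
  assumes k: "k \<noteq> 0" and "b21 \<noteq> b22" "b11 = b22"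
    and q10: "a11 * b11 - k * (a11 - a21) * (b11 - b22) = 0"
    and q01: "a12 * b21 - k * (a12 - a21) * (b21 - b22) = 0"
    and qxy: "a12 * b11 + a11 * b21 * k - (a11 - a21) * (b21 - b22) * k^2 - (a12 - a21) * (b11 - b22) * k = 0"
  shows "spohn_condition_9 a11 a12 a21 0 b11 0 b21 b22 \<or> spohn_condition_10 a11 a12 a21 0 b11 0 b21 b22"
proof -
  have a11: "a11 = 0"
    using q10 \<open>b11 = b22\<close> b11_neq_0 by simp
  have "a12 \<noteq> 0"
    using q01 k \<open>b21 \<noteq> b22\<close> a21_neq_0 by auto
  moreover have "a12 * ((a12 * b21 - (a12 - a21) * b11) * (a21 * b21 + (a12 - a21) * b11)) = 0"
    using q01 qxy a11 \<open>b11 = b22\<close> by algebra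
  ultimately consider "a12 * b21 - (a12 - a21) * b11 = 0" | "a21 * b21 + (a12 - a21) * b11 = 0"
    by auto
  then show ?thesis
  proof cases
    case 1
    then have "spohn_condition_10 a11 a12 a21 0 b11 0 b21 b22"
      unfolding spohn_condition_10_def using a11 \<open>b11 = b22\<close> by algebra
    then show ?thesis ..
  next
    case 2
    then have "spohn_condition_9 a11 a12 a21 0 b11 0 b21 b22"
      unfolding spohn_condition_9_def using a11 \<open>b11 = b22\<close> by algebra
    then show ?thesis ..
  qed
qed

lemma y_root_b11_neq_b22:
  assumes k: "k \<noteq> 0" and "b21 \<noteq> b22" "b11 \<noteq> b22"
    and q10: "a11 * b11 - k * (a11 - a21) * (b11 - b22) = 0"
    and q01: "a12 * b21 - k * (a12 - a21) * (b21 - b22) = 0"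
    and qxy: "a12 * b11 + a11 * b21 * k - (a11 - a21) * (b21 - b22) * k^2 - (a12 - a21) * (b11 - b22) * k = 0"
  shows "spohn_condition_9 a11 a12 a21 0 b11 0 b21 b22 \<or> spohn_condition_10 a11 a12 a21 0 b11 0 b21 b22"
proof -
  have "(b11 * (b21 - b22) - b21 * (b11 - b22)) * (a12 * (b11 - b22) - a11 * (b21 - b22) * k) = 0"
    using q10 q01 qxy by algebra
  then have D: "a12 * (b11 - b22) = a11 * (b21 - b22) * k"
    using det_b_neq_0 by simp
  have "(b21 - b22) * k * ((a12 - a21) * (b11 - b22) - a11 * b21) = 0"
    using q01 D by algebra
  then have Z: "(a12 - a21) * (b11 - b22) = a11 * b21"
    using k \<open>b21 \<noteq> b22\<close> by simp
  have "a11 \<noteq> 0"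
    using D \<open>b11 \<noteq> b22\<close> a11_neq_a12 by auto
  moreover have "a11 * ((k - 1) * (k * (b21 - b22) - b11)) = 0"
    using q10 Z D by algebra
  ultimately consider "k = 1" | "k * (b21 - b22) = b11"
    by auto
  then show ?thesis
  proof cases
    case 1
    then have "spohn_condition_9 a11 a12 a21 0 b11 0 b21 b22"
      unfolding spohn_condition_9_def using q10 q01 D by algebra
    then show ?thesis ..
  next
    case 2
    have e2: "a12 * b11 - a12 * b21 - a21 * b11 = 0"
      using q01 2 by algebra
    have "b11 * (a11 * b11 - a11 * b21 - a21 * b11 + a21 * b22) = 0"
      using q10 2 by algebra
    then have e3: "a11 * b11 - a11 * b21 - a21 * b11 + a21 * b22 = 0"
      using b11_neq_0 by simp
    have "a21 * (- a11 * b21 + a12 * b21 - a12 * b22 + a21 * b22) = 0"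
      using e2 e3 by algebra
    then have "- a11 * b21 + a12 * b21 - a12 * b22 + a21 * b22 = 0"
      using a21_neq_0 by simp
    with e2 e3 have "spohn_condition_10 a11 a12 a21 0 b11 0 b21 b22"
      unfolding spohn_condition_10_def by algebra
    then show ?thesis ..
  qed
qed

lemma condition_of_y_root:
  assumes root: "poly F (var_y * const2 k) = 0" and k: "k \<noteq> 0" and "b21 \<noteq> b22"
  shows "spohn_condition_9 a11 a12 a21 0 b11 0 b21 b22 \<or> spohn_condition_10 a11 a12 a21 0 b11 0 b21 b22"
  using y_root_b11_eq_b22[OF k \<open>b21 \<noteq> b22\<close> _ y_root_equations[OF root k]]
    y_root_b11_neq_b22[OF k \<open>b21 \<noteq> b22\<close> _ y_root_equations[OF root k]]
  by blast

lemma T_root_equations: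
  assumes "poly F (T * const2 k) = 0" "k \<noteq> 0"
  shows "(b11 - b22) + (b21 - b22) * k * a11 = 0"
    and "a12 * (b21 - k * (a12 - a21) * (b21 - b22)) = 0"
    and "(b11 + b21 * k * (a11 + a12))
      - k * ((a11 - a21) + (a12 - a21)) * ((b11 - b22) + (b21 - b22) * k * (a11 + a12)) = 0"
proof -
  define Q where "Q = var_y * (const2 b11 * var_x + const2 b21 * T * const2 k)
    - const2 k * V * (const2 (b11 - b22) * var_x + const2 (b21 - b22) * T * const2 k)"
  have "poly F (T * const2 k) = T * Q"
    unfolding poly_spohn_quadratic Q_def by algebra
  with assms(1) have "Q = 0" by (simp add: T_neq_0)
  then have "eval2 Q 1 0 = 0" "eval2 Q 0 1 = 0" "eval2 Q 1 1 = 0" by simp_all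
  then have "k * (a11 - a21) * ((b11 - b22) + (b21 - b22) * k * a11) = 0"
    and "k * (a12 * (b21 - k * (a12 - a21) * (b21 - b22))) = 0"
    and "(b11 + b21 * k * (a11 + a12))
      - k * ((a11 - a21) + (a12 - a21)) * ((b11 - b22) + (b21 - b22) * k * (a11 + a12)) = 0"
    unfolding Q_def eval2_simps by algebra+
  then show "(b11 - b22) + (b21 - b22) * k * a11 = 0"
    and "a12 * (b21 - k * (a12 - a21) * (b21 - b22)) = 0"
    and "(b11 + b21 * k * (a11 + a12))
      - k * ((a11 - a21) + (a12 - a21)) * ((b11 - b22) + (b21 - b22) * k * (a11 + a12)) = 0"
    using assms(2) a11_neq_a21 by simp_all
qed

lemma condition_of_T_root:
  assumes root: "poly F (T * const2 k) = 0" and k: "k \<noteq> 0" and "b21 \<noteq> b22"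
  shows "spohn_condition_11 a11 a12 a21 0 b11 0 b21 b22 \<or> spohn_condition_12 a11 a12 a21 0 b11 0 b21 b22"
proof -
  note t = T_root_equations[OF root k]
  have "a12 \<noteq> 0"
  proof
    assume "a12 = 0"
    with t have "b11 + b21 * k * a11 = 0" by algebra
    with t(1) have "b11 * (b21 - b22) - b21 * (b11 - b22) = 0" by algebra
    with det_b_neq_0 show False ..
  qed
  with t(2) have u: "b21 = k * (a12 - a21) * (b21 - b22)" by simp
  have L: "b11 + k * a11 * b21 - k^2 * (a11 - a21) * a12 * (b21 - b22) = 0"
    using t(1,3) u by algebra
  have "(b21 - b22) * ((k * a21 + 1) * (k * (a11 - a12) + 1)) = 0"
    using t(1) u L by algebra
  then consider "k * a21 + 1 = 0" | "k * (a11 - a12) + 1 = 0"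
    using \<open>b21 \<noteq> b22\<close> by auto
  then show ?thesis
  proof cases
    case 1
    have e1: "- a12 * b21 + a12 * b22 - a21 * b22 = 0" using u 1 by algebra
    have e2: "- a11 * b21 + a11 * b22 + a21 * b11 - a21 * b22 = 0" using t(1) 1 by algebra
    have "a21 * (a11 * b22 + a12 * b11 - a12 * b22) = 0" using e1 e2 by algebra
    then have "a11 * b22 + a12 * b11 - a12 * b22 = 0" using a21_neq_0 by simp
    with e1 e2 have "spohn_condition_11 a11 a12 a21 0 b11 0 b21 b22"
      unfolding spohn_condition_11_def by algebra
    then show ?thesis ..
  next
    case 2
    then have "spohn_condition_12 a11 a12 a21 0 b11 0 b21 b22"
      unfolding spohn_condition_12_def using t(1) u L by algebra
    then show ?thesis ..
  qed
qed

lemma condition_if_root: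
  assumes "b21 \<noteq> b22" "poly F w = 0"
  shows "spohn_condition_9 a11 a12 a21 0 b11 0 b21 b22 \<or> spohn_condition_10 a11 a12 a21 0 b11 0 b21 b22 \<or>
    spohn_condition_11 a11 a12 a21 0 b11 0 b21 b22 \<or> spohn_condition_12 a11 a12 a21 0 b11 0 b21 b22"
proof -
  obtain k qs where k: "k \<noteq> 0" and qs: "qs \<in> set (subseqs [var_x, var_y, T])"
    and w: "w = prod_list qs * const2 k"
    using root_eq_scaled_subproduct[OF assms(2)] .
  from qs assms(2) show ?thesis
    unfolding w
    using poly_F_const2_neq_0[OF k assms(1)] poly_F_x_neq_0[OF k]
      poly_F_xy_neq_0[OF k, unfolded mult.assoc] poly_F_xT_neq_0[OF k, unfolded mult.assoc]
      poly_F_yT_neq_0[OF k, unfolded mult.assoc] poly_F_xyT_neq_0[OF k, unfolded mult.assoc]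
      condition_of_y_root[OF _ k assms(1)] condition_of_T_root[OF _ k assms(1)]
    by (auto simp: mult.assoc)
qed

lemma condition_if_reducible:
  assumes "reducible F"
  shows "spohn_reducibility_condition a11 a12 a21 0 b11 0 b21 b22"
  using root_if_reducible[OF assms] condition_if_root
  unfolding spohn_reducibility_condition_def by blast

end

lemma reducible_spohn_quadratic_iff:
  fixes a11 a12 a21 b11 b21 b22 :: complex
  shows "reducible (spohn_quadratic a11 a12 a21 b11 b21 b22) \<longleftrightarrow>
    spohn_quadratic a11 a12 a21 b11 b21 b22 \<noteq> 0 \<and>
    spohn_reducibility_condition a11 a12 a21 0 b11 0 b21 b22"
proof
  assume red: "reducible (spohn_quadratic a11 a12 a21 b11 b21 b22)"
  have "spohn_reducibility_condition a11 a12 a21 0 b11 0 b21 b22"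
  proof (rule ccontr)
    assume "\<not> spohn_reducibility_condition a11 a12 a21 0 b11 0 b21 b22"
    then interpret spohn_nondegenerate a11 a12 a21 b11 b21 b22
      by unfold_locales (auto simp: spohn_reducibility_condition_def)
    from red show False
      using condition_if_reducible \<open>\<not> spohn_reducibility_condition a11 a12 a21 0 b11 0 b21 b22\<close>
      by blast
  qed
  with red show "spohn_quadratic a11 a12 a21 b11 b21 b22 \<noteq> 0 \<and>
      spohn_reducibility_condition a11 a12 a21 0 b11 0 b21 b22"
    by (simp add: reducible_def)
qed (blast intro: reducible_spohn_quadratic_if_condition)

theorem theorem3p2:
  fixes a11 a12 a21 a22 b11 b12 b21 b22 :: real
  shows "reducible (spohn_cubic a11 a12 a21 a22 b11 b12 b21 b22) \<longleftrightarrow>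
    spohn_cubic a11 a12 a21 a22 b11 b12 b21 b22 \<noteq> 0 \<and>
    (a11 = a12 \<or> a11 = a21 \<or> a21 = a22 \<or> b11 = b12 \<or> b11 = b21 \<or> b12 = b22 \<or>
     (a12 = a22 \<and> b21 = b22) \<or> (a12 = a21 \<and> b12 = b21) \<or>
     (a12 * (b12 - b22) + a21 * (b22 - b21) + a22 * (b21 - b12) = 0 \<and>
      a11 * (b22 - b12) + a21 * (b11 - b22) + a22 * (b12 - b11) = 0 \<and>
      a11 * (b22 - b21) + a12 * (b11 - b22) + a22 * (b21 - b11) = 0) \<or>
     (a11 * (b12 - b21) + a12 * (b21 - b22) + a21 * (b22 - b12) = 0 \<and>
      a12 * (b11 - b21) + a21 * (b12 - b11) + a22 * (b21 - b12) = 0 \<and>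
      a11 * (b11 - b21) + a21 * (b22 - b11) + a22 * (b21 - b22) = 0) \<or>
     (a12 * (b22 - b21) + a21 * (b12 - b22) + a22 * (b21 - b12) = 0 \<and>
      a11 * (b22 - b21) + a21 * (b11 - b22) + a22 * (b21 - b11) = 0 \<and>
      a11 * (b22 - b12) + a12 * (b11 - b22) + a22 * (b12 - b11) = 0) \<or>
     (a11 * (b12 - b21) + a12 * (b22 - b12) + a21 * (b21 - b22) = 0 \<and>
      a12 * (b11 - b12) + a21 * (b21 - b11) + a22 * (b12 - b21) = 0 \<and>
      a11 * (b11 - b21) + a12 * (b22 - b12) + a21 * (b21 - b11) + a22 * (b12 - b22) = 0))"
proof -
  have "spohn_reducibility_condition a11 a12 a21 a22 b11 b12 b21 b22 \<longleftrightarrow>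
      spohn_reducibility_condition (complex_of_real (a11 - a22)) (of_real (a12 - a22))
        (of_real (a21 - a22)) 0 (of_real (b11 - b12)) 0 (of_real (b21 - b12)) (of_real (b22 - b12))"
    using spohn_reducibility_condition_normalize[of a11 a12 a21 a22 b11 b12 b21 b22]
      spohn_reducibility_condition_of_real[where 'a = complex,
        of "a11 - a22" "a12 - a22" "a21 - a22" 0 "b11 - b12" 0 "b21 - b12" "b22 - b12"]
    by simp
  then show ?thesis
    unfolding spohn_cubic_eq_quadratic reducible_spohn_quadratic_iff
      spohn_condition_defs[symmetric] spohn_reducibility_condition_def[symmetric]
    by simp
qed

end
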